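(* Let $G=(V,E)$ be a graph with maximum degree $\Delta$ and let $h\le\log\Delta$ be a nonnegative integer. Assuming the base case of Procedure Edge-Coloring produces a proper $(\Delta'+1)$-edge-coloring of its input (of maximum degree $\Delta'$), Procedure Edge-Coloring$(G,h)$ computes a proper $(\Delta+3\cdot 2^h)$-edge-coloring of $G$.
   Context: Logarithms are base 2. A proper $k$-edge-coloring of $G$ is a map $\varphi:E\to\{1,\dots,k\}$ with $\varphi(e)\ne\varphi(e')$ for distinct edges sharing an endpoint. A degree-splitting of $H$ with discrepancy $\kappa$ is a partition $(E_1,E_2)$ of $E(H)$ with $|\deg_{E_1}(v)-\deg_{E_2}(v)|\le\kappa$ for every vertex $v$. Procedure Edge-Coloring$(H,h)$: if $h=0$, return a proper $(\Delta(H)+1)$-edge-coloring of $H$ with palette $\{1,\dots,\Delta(H)+1\}$ computed by a base-case subroutine. Otherwise compute a degree-splitting $(E_1,E_2)$ of $H$ with discrepancy at most 2 and $\{|E_1|,|E_2|\}=\{\lfloor |E(H)|/2\rfloor,\lceil |E(H)|/2\rceil\}$; let $H_1=(V(H),E_1)$, $H_2=(V(H),E_2)$ (isolated vertices discarded); compute $\varphi_1=$ Edge-Coloring$(H_1,h-1)$, $\varphi_2=$ Edge-Coloring$(H_2,h-1)$; return $\varphi(e)=\varphi_1(e)$ for $e\in E_1$ and $\varphi(e)=p_1+\varphi_2(e)$ for $e\in E_2$, where $p_1$ is the palette size of $\varphi_1$ (the palette of $\varphi$ has size $p_1+p_2$). *)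

theory Defs
  imports Complex_Main
begin

text \<open>A (simple, finite) graph is given by its edge set; every edge is a 2-element
  set of vertices. Isolated vertices play no role, so the vertex set is left implicit.\<close>

definition graph :: "'a set set \<Rightarrow> bool" where
  "graph E \<longleftrightarrow> finite E \<and> (\<forall>e\<in>E. card e = 2)"

definition deg :: "'a set set \<Rightarrow> 'a \<Rightarrow> nat" where
  "deg E v = card {e\<in>E. v \<in> e}"

definition maxdeg :: "'a set set \<Rightarrow> nat" where
  "maxdeg E = Max ({deg E v | v. v \<in> \<Union>E} \<union> {0})"

definition proper_edge_coloring :: "'a set set \<Rightarrow> nat \<Rightarrow> ('a set \<Rightarrow> nat) \<Rightarrow> bool" where
  "proper_edge_coloring E k \<phi> \<longleftrightarrow>
     (\<forall>e\<in>E. \<phi> e \<in> {1..k}) \<and>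
     (\<forall>e\<in>E. \<forall>e'\<in>E. e \<noteq> e' \<and> e \<inter> e' \<noteq> {} \<longrightarrow> \<phi> e \<noteq> \<phi> e')"

definition degree_splitting :: "'a set set \<Rightarrow> 'a set set \<Rightarrow> 'a set set \<Rightarrow> nat \<Rightarrow> bool" where
  "degree_splitting E E1 E2 \<kappa> \<longleftrightarrow>
     E1 \<union> E2 = E \<and> E1 \<inter> E2 = {} \<and>
     (\<forall>v. \<bar>int (deg E1 v) - int (deg E2 v)\<bar> \<le> int \<kappa>)"

text \<open>edge_coloring_run H h phi p: some execution of Procedure Edge-Coloring(H,h)
  (with any admissible choice of degree splittings, and a base-case subroutine that
  returns a proper (Delta(H)+1)-edge-coloring) returns the coloring \<phi> with palette size p.\<close>
inductive edge_coloring_run :: "'a set set \<Rightarrow> nat \<Rightarrow> ('a set \<Rightarrow> nat) \<Rightarrow> nat \<Rightarrow> bool" where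
  base: "proper_edge_coloring H (maxdeg H + 1) \<phi> \<Longrightarrow>
         edge_coloring_run H 0 \<phi> (maxdeg H + 1)"
| step: "\<lbrakk> degree_splitting H E1 E2 2;
          {card E1, card E2} = {card H div 2, (card H + 1) div 2};
          edge_coloring_run E1 h \<phi>1 p1;
          edge_coloring_run E2 h \<phi>2 p2 \<rbrakk> \<Longrightarrow>
         edge_coloring_run H (Suc h) (\<lambda>e. if e \<in> E1 then \<phi>1 e else p1 + \<phi>2 e) (p1 + p2)"

end

theory Submission
  imports Defs
begin

text \<open>Every run of the procedure yields a proper colouring with palette size \<open>p\<close>
  satisfying the invariant \<open>p + 2 \<le> \<Delta> + 3 \<cdot> 2\<^sup>h\<close>. The base case gives \<open>p = \<Delta> + 1\<close>.
  In a split with discrepancy 2 every vertex has degree at most \<open>(\<Delta> + 2) / 2\<close> in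
  either half, so \<open>\<Delta>\<^sub>1 + \<Delta>\<^sub>2 \<le> \<Delta> + 2\<close>, and adding the invariants of the two halves
  gives \<open>p\<^sub>1 + p\<^sub>2 + 2 \<le> \<Delta> + 3 \<cdot> 2\<^sup>h\<^sup>+\<^sup>1\<close>.\<close>

lemma finite_degrees:
  assumes "finite E"
  shows "finite ({deg E v | v. v \<in> \<Union>E} \<union> {0})"
proof -
  have "{deg E v | v. v \<in> \<Union>E} \<subseteq> {0..card E}"
    unfolding deg_def using assms by (auto intro: card_mono)
  then show ?thesis
    using finite_subset by blast
qed

lemma deg_le_maxdeg:
  assumes "finite E"
  shows "deg E v \<le> maxdeg E"
proof (cases "v \<in> \<Union>E")
  case True
  then show ?thesis
    unfolding maxdeg_def by (intro Max_ge[OF finite_degrees[OF assms]]) blast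
next
  case False
  then have "{e \<in> E. v \<in> e} = {}"
    by blast
  then have "deg E v = 0"
    unfolding deg_def by (simp only: card.empty)
  then show ?thesis
    by simp
qed

lemma maxdeg_le:
  assumes "finite E" and "\<And>v. deg E v \<le> M"
  shows "maxdeg E \<le> M"
  unfolding maxdeg_def using assms(2)
  by (subst Max_le_iff[OF finite_degrees[OF assms(1)]]) auto

lemma deg_Un_disjoint:
  assumes "finite E1" "finite E2" "E1 \<inter> E2 = {}"
  shows "deg (E1 \<union> E2) v = deg E1 v + deg E2 v"
proof -
  have "{e \<in> E1 \<union> E2. v \<in> e} = {e \<in> E1. v \<in> e} \<union> {e \<in> E2. v \<in> e}"
    by auto
  then show ?thesis
    unfolding deg_def using assms by (simp add: card_Un_disjoint disjoint_iff)
qed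

lemma degree_splitting_commute:
  "degree_splitting H E1 E2 \<kappa> \<longleftrightarrow> degree_splitting H E2 E1 \<kappa>"
  unfolding degree_splitting_def by (auto simp: abs_minus_commute)

lemma degree_splitting_maxdeg_le:
  assumes "finite H" and split: "degree_splitting H E1 E2 \<kappa>"
  shows "2 * maxdeg E1 \<le> maxdeg H + \<kappa>"
proof -
  have H: "H = E1 \<union> E2" and disj: "E1 \<inter> E2 = {}"
    and discrepancy: "\<And>v. \<bar>int (deg E1 v) - int (deg E2 v)\<bar> \<le> int \<kappa>"
    using split unfolding degree_splitting_def by auto
  have fin: "finite E1" "finite E2"
    using \<open>finite H\<close> H by auto
  have "2 * deg E1 v \<le> maxdeg H + \<kappa>" for v
  proof -
    have "deg E1 v + deg E2 v \<le> maxdeg H"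
      using deg_le_maxdeg[OF \<open>finite H\<close>, of v] deg_Un_disjoint[OF fin disj, of v] H by simp
    then show ?thesis
      using discrepancy[of v] by linarith
  qed
  then have "deg E1 v \<le> (maxdeg H + \<kappa>) div 2" for v
    by (metis div_le_mono nonzero_mult_div_cancel_left zero_neq_numeral)
  then have "maxdeg E1 \<le> (maxdeg H + \<kappa>) div 2"
    by (rule maxdeg_le[OF fin(1)])
  then show ?thesis
    by linarith
qed

lemma proper_edge_coloring_mono:
  assumes "proper_edge_coloring E k \<phi>" and "k \<le> k'"
  shows "proper_edge_coloring E k' \<phi>"
  using assms unfolding proper_edge_coloring_def by fastforce

lemma proper_edge_coloring_shifted_Un:
  assumes "proper_edge_coloring E1 p1 \<phi>1" and "proper_edge_coloring E2 p2 \<phi>2"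
  shows "proper_edge_coloring (E1 \<union> E2) (p1 + p2) (\<lambda>e. if e \<in> E1 then \<phi>1 e else p1 + \<phi>2 e)"
    (is "proper_edge_coloring _ _ ?\<phi>")
proof -
  have range1: "\<phi>1 e \<in> {1..p1}" if "e \<in> E1" for e
    using assms(1) that unfolding proper_edge_coloring_def by blast
  have range2: "\<phi>2 e \<in> {1..p2}" if "e \<in> E2" for e
    using assms(2) that unfolding proper_edge_coloring_def by blast
  have "?\<phi> e \<le> p1" if "e \<in> E1" for e
    using range1[OF that] that by simp
  moreover have "?\<phi> e > p1" if "e \<in> E2" "e \<notin> E1" for e
    using range2[OF that(1)] that(2) by simp
  ultimately have across: "?\<phi> e \<noteq> ?\<phi> e'"
    if "e \<in> E1 \<union> E2" "e' \<in> E1 \<union> E2" "e \<in> E1 \<longleftrightarrow> e' \<notin> E1" for e e'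
    using that by (metis UnE not_le)
  show ?thesis
    unfolding proper_edge_coloring_def
  proof (intro conjI ballI impI)
    fix e assume "e \<in> E1 \<union> E2"
    then show "?\<phi> e \<in> {1..p1 + p2}"
      using range1 range2 by fastforce
  next
    fix e e' assume edges: "e \<in> E1 \<union> E2" "e' \<in> E1 \<union> E2" and adj: "e \<noteq> e' \<and> e \<inter> e' \<noteq> {}"
    consider "e \<in> E1" "e' \<in> E1" | "e \<in> E2" "e' \<in> E2" "e \<notin> E1" "e' \<notin> E1"
      | "e \<in> E1 \<longleftrightarrow> e' \<notin> E1"
      using edges by blast
    then show "?\<phi> e \<noteq> ?\<phi> e'"
    proof cases
      case 1
      then show ?thesis
        using assms(1) adj unfolding proper_edge_coloring_def by simp
    next
      case 2
      then show ?thesis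
        using assms(2) adj unfolding proper_edge_coloring_def by simp
    next
      case 3
      then show ?thesis
        using across edges by blast
    qed
  qed
qed

lemma edge_coloring_run_proper:
  assumes "edge_coloring_run H h \<phi> p"
  shows "proper_edge_coloring H p \<phi>"
  using assms
proof (induction rule: edge_coloring_run.induct)
  case (step H E1 E2 h \<phi>1 p1 \<phi>2 p2)
  then have "H = E1 \<union> E2"
    unfolding degree_splitting_def by simp
  with step.IH show ?case
    using proper_edge_coloring_shifted_Un by blast
qed

lemma edge_coloring_run_palette_le:
  assumes "edge_coloring_run H h \<phi> p" and "finite H"
  shows "p + 2 \<le> maxdeg H + 3 * 2 ^ h"
  using assms
proof (induction rule: edge_coloring_run.induct)
  case (base H \<phi>)
  then show ?case by simp
next
  case (step H E1 E2 h \<phi>1 p1 \<phi>2 p2)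
  have "H = E1 \<union> E2"
    using step.hyps(1) unfolding degree_splitting_def by simp
  then have "finite E1" "finite E2"
    using step.prems by auto
  then have "p1 + 2 \<le> maxdeg E1 + 3 * 2 ^ h" "p2 + 2 \<le> maxdeg E2 + 3 * 2 ^ h"
    using step.IH by auto
  moreover have "2 * maxdeg E1 \<le> maxdeg H + 2" "2 * maxdeg E2 \<le> maxdeg H + 2"
    using degree_splitting_maxdeg_le[OF step.prems] step.hyps(1) degree_splitting_commute
    by blast+
  ultimately show ?case
    by simp
qed

theorem lemma3p5:
  fixes G :: "'a set set" and h :: nat and \<phi> :: "'a set \<Rightarrow> nat" and p :: nat
  assumes "graph G"
    and "real h \<le> log 2 (real (maxdeg G))"
    and "edge_coloring_run G h \<phi> p"
  shows "proper_edge_coloring G (maxdeg G + 3 * 2 ^ h) \<phi>"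
proof -
  have "finite G"
    using \<open>graph G\<close> unfolding graph_def by simp
  then have "p \<le> maxdeg G + 3 * 2 ^ h"
    using edge_coloring_run_palette_le[OF assms(3)] by fastforce
  then show ?thesis
    using proper_edge_coloring_mono edge_coloring_run_proper[OF assms(3)] by blast
qed

end
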